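(* Let $\Sigma$ be a finite alphabet, $S\in\Sigma^m$, and $a,a'\in\Sigma^m$ with $\mathrm{rep}_{\mathrm{Foc}(S)}(a)=\mathrm{rep}_{\mathrm{Foc}(S)}(a')$. Then $f^S_{\mathrm{BOM}}(a)=f^S_{\mathrm{BOM}}(a')$ and $g^S_{\mathrm{BOM}}(a)=g^S_{\mathrm{BOM}}(a')$.
   Context: For $S=s_0\cdots s_{m-1}$ let $p=p_1\cdots p_m=S^{\mathrm{rev}}$. The factor oracle of $p$ is the deterministic automaton with states $0,\dots,m$, start state $0$, built as follows: set $\mathrm{sl}(0)=-1$; for $i=1,\dots,m$: add transition $i-1\xrightarrow{p_i} i$; let $k=\mathrm{sl}(i-1)$; while $k\ne-1$ and $k$ has no transition labelled $p_i$, add $k\xrightarrow{p_i} i$ and set $k=\mathrm{sl}(k)$; then $\mathrm{sl}(i)=-1$ if $k=-1$, else the target of $k$'s transition labelled $p_i$. Missing transitions lead to a sink FAIL. $\mathrm{Foc}(S)$ is the set of $x\in\Sigma^*$ such that the factor oracle is not in FAIL after reading $x^{\mathrm{rev}}$, and $\mathrm{rep}_{\mathrm{Foc}(S)}(a)$ is the longest suffix of $a$ (including $\varepsilon$) in $\mathrm{Foc}(S)$. For a window $w=w_0\cdots w_{m-1}$, the oracle reads $w_{m-1},w_{m-2},\dots$; let $k^S_w$ be the number of transitions made before entering FAIL (excluding the transition into FAIL). Cost: $f^S_{\mathrm{BOM}}(w)=m$ if $w=S$, else $k^S_w+1$. Shift: $g^S_{\mathrm{BOM}}(w)=1$ if $w=S$,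 else $m-k^S_w$. *)

theory Defs
  imports Main
begin

type_synonym 'a trans = "nat \<Rightarrow> 'a \<Rightarrow> nat option"

(* Inner while loop of the factor-automaton (FO) construction, with a fuel argument
  (the suffix-link chain strictly decreases, so fuel i+1 suffices at step i). *)
fun fo_loop :: "nat \<Rightarrow> 'a trans \<Rightarrow> (nat \<Rightarrow> int) \<Rightarrow> 'a \<Rightarrow> nat \<Rightarrow> int \<Rightarrow> 'a trans \<times> int" where
  "fo_loop 0 \<delta> sl c i k = (\<delta>, k)"
| "fo_loop (Suc n) \<delta> sl c i k =
     (if k = -1 then (\<delta>, k)
      else if \<delta> (nat k) c \<noteq> None then (\<delta>, k)
      else fo_loop n (\<delta>(nat k := (\<delta> (nat k))(c := Some i))) sl c i (sl (nat k)))"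

(* fo_build p i = (transitions, suffix links) after processing p_1 .. p_i. *)
fun fo_build :: "'a list \<Rightarrow> nat \<Rightarrow> 'a trans \<times> (nat \<Rightarrow> int)" where
  "fo_build p 0 = ((\<lambda>_ _. None), (\<lambda>_. -1))"
| "fo_build p (Suc i) =
     (let (\<delta>, sl) = fo_build p i;
          c = p ! i;
          \<delta>1 = \<delta>(i := (\<delta> i)(c := Some (Suc i)));
          (\<delta>2, k) = fo_loop (Suc i) \<delta>1 sl c (Suc i) (sl i)
      in (\<delta>2, sl(Suc i := (if k = -1 then -1 else int (the (\<delta>2 (nat k) c))))))"

definition factor_orc :: "'a list \<Rightarrow> 'a trans" where
  "factor_orc S = fst (fo_build (rev S) (length S))"

fun run :: "'a trans \<Rightarrow> nat \<Rightarrow> 'a list \<Rightarrow> nat option" where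
  "run \<delta> q [] = Some q"
| "run \<delta> q (c # cs) = (case \<delta> q c of None \<Rightarrow> None | Some q' \<Rightarrow> run \<delta> q' cs)"

fun steps :: "'a trans \<Rightarrow> nat \<Rightarrow> 'a list \<Rightarrow> nat" where
  "steps \<delta> q [] = 0"
| "steps \<delta> q (c # cs) = (case \<delta> q c of None \<Rightarrow> 0 | Some q' \<Rightarrow> Suc (steps \<delta> q' cs))"

definition Foc :: "'a list \<Rightarrow> 'a list set" where
  "Foc S = {x. run (factor_orc S) 0 (rev x) \<noteq> None}"

definition rep :: "'a list set \<Rightarrow> 'a list \<Rightarrow> 'a list" where
  "rep L a = drop (LEAST n. drop n a \<in> L) a"

definition kBOM :: "'a list \<Rightarrow> 'a list \<Rightarrow> nat" where
  "kBOM S w = steps (factor_orc S) 0 (rev w)"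

definition fBOM :: "'a list \<Rightarrow> 'a list \<Rightarrow> nat" where
  "fBOM S w = (if w = S then length S else kBOM S w + 1)"

definition gBOM :: "'a list \<Rightarrow> 'a list \<Rightarrow> nat" where
  "gBOM S w = (if w = S then 1 else length S - kBOM S w)"

end

theory Submission
  imports Defs
begin

text \<open>
  The oracle of rev S accepts its own spine, so it never fails while reading rev S and
  k(S) = m. Reading a word succeeds exactly on its prefixes of length at most the number
  of steps made, so the representative of a window w is its suffix of length k(w). Hence
  equal representatives force equal k, and a window of length m equals S iff its
  representative does; cost and shift depend only on these two data.
\<close>

lemma fo_loop_preserves_transition:
  "\<delta> q c' = Some x \<Longrightarrow> fst (fo_loop n \<delta> sl c i k) q c' = Some x"
proof (induction n arbitrary: \<delta> k)
  case (Suc n)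
  show ?case
  proof (cases "k = -1 \<or> \<delta> (nat k) c \<noteq> None")
    case False
    then have "(\<delta>(nat k := (\<delta> (nat k))(c := Some i))) q c' = Some x"
      using Suc.prems by auto
    then show ?thesis using False Suc.IH by simp
  qed (use Suc.prems in auto)
qed simp

lemma fo_build_Suc_preserves_transition:
  assumes "q \<noteq> i" and "fst (fo_build p i) q c = Some x"
  shows "fst (fo_build p (Suc i)) q c = Some x"
proof -
  obtain \<delta> sl where build: "fo_build p i = (\<delta>, sl)" by fastforce
  let ?\<delta>1 = "\<delta>(i := (\<delta> i)(p ! i := Some (Suc i)))"
  obtain \<delta>2 k where loop: "fo_loop (Suc i) ?\<delta>1 sl (p ! i) (Suc i) (sl i) = (\<delta>2, k)"
    by fastforce
  have "?\<delta>1 q c = Some x" using assms build by simp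
  then have "\<delta>2 q c = Some x"
    using fo_loop_preserves_transition loop by (metis fst_conv)
  then show ?thesis using build loop by (simp add: Let_def)
qed

lemma fo_build_preserves_transition:
  assumes "i \<le> j" and "q < i" and "fst (fo_build p i) q c = Some x"
  shows "fst (fo_build p j) q c = Some x"
  using assms(1)
proof (induction j rule: dec_induct)
  case base
  then show ?case using assms(3) .
next
  case (step j)
  then show ?case using assms(2) by (intro fo_build_Suc_preserves_transition) auto
qed

lemma fo_build_spine:
  assumes "q < n"
  shows "fst (fo_build p n) q (p ! q) = Some (Suc q)"
proof -
  obtain \<delta> sl where build: "fo_build p q = (\<delta>, sl)" by fastforce
  let ?\<delta>1 = "\<delta>(q := (\<delta> q)(p ! q := Some (Suc q)))"
  obtain \<delta>2 k where loop: "fo_loop (Suc q) ?\<delta>1 sl (p ! q) (Suc q) (sl q) = (\<delta>2, k)"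
    by fastforce
  have "?\<delta>1 q (p ! q) = Some (Suc q)" by simp
  then have "\<delta>2 q (p ! q) = Some (Suc q)"
    using fo_loop_preserves_transition loop by (metis fst_conv)
  then have "fst (fo_build p (Suc q)) q (p ! q) = Some (Suc q)"
    using build loop by (simp add: Let_def)
  then show ?thesis
    using assms fo_build_preserves_transition[of "Suc q" n q] by simp
qed

lemma factor_orc_spine:
  "q < length S \<Longrightarrow> factor_orc S q (rev S ! q) = Some (Suc q)"
  unfolding factor_orc_def by (simp add: fo_build_spine)

lemma run_drop_spine:
  assumes "\<And>q. q < length p \<Longrightarrow> \<delta> q (p ! q) = Some (Suc q)"
  shows "run \<delta> q (drop q p) \<noteq> None"
proof (induction "length p - q" arbitrary: q)
  case (Suc n)
  then have "q < length p" by simp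
  then have "drop q p = p ! q # drop (Suc q) p"
    by (rule Cons_nth_drop_Suc[symmetric])
  moreover have "run \<delta> (Suc q) (drop (Suc q) p) \<noteq> None"
    using Suc by simp
  ultimately show ?case
    using assms \<open>q < length p\<close> by simp
qed simp

lemma steps_le_length: "steps \<delta> q w \<le> length w"
  by (induction w arbitrary: q) (auto split: option.splits)

lemma run_take_iff_le_steps:
  "j \<le> length w \<Longrightarrow> run \<delta> q (take j w) \<noteq> None \<longleftrightarrow> j \<le> steps \<delta> q w"
proof (induction w arbitrary: q j)
  case (Cons c w)
  then show ?case
    by (cases j; cases "\<delta> q c") auto
qed simp

lemma kBOM_le_length: "kBOM S w \<le> length w"
  unfolding kBOM_def by (metis steps_le_length length_rev)

lemma kBOM_self: "kBOM S S = length S"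
proof -
  have "run (factor_orc S) 0 (rev S) \<noteq> None"
    using run_drop_spine[of "rev S" "factor_orc S" 0] by (simp add: factor_orc_spine)
  then have "length S \<le> kBOM S S"
    unfolding kBOM_def using run_take_iff_le_steps[of "length S" "rev S"] by simp
  then show ?thesis using kBOM_le_length[of S S] by simp
qed

lemma rep_Foc_eq_drop: "rep (Foc S) w = drop (length w - kBOM S w) w"
proof -
  have drop_in_Foc: "drop n w \<in> Foc S \<longleftrightarrow> length w - n \<le> kBOM S w" for n
    unfolding Foc_def kBOM_def
    using run_take_iff_le_steps[of "length w - n" "rev w" "factor_orc S" 0]
    by (simp add: rev_drop)
  have "(LEAST n. drop n w \<in> Foc S) = length w - kBOM S w"
    unfolding drop_in_Foc by (rule Least_equality) (use kBOM_le_length[of S w] in auto)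
  then show ?thesis unfolding rep_def by simp
qed

lemma length_rep_Foc: "length (rep (Foc S) w) = kBOM S w"
  using kBOM_le_length[of S w] by (simp add: rep_Foc_eq_drop)

lemma rep_Foc_eq_self_iff:
  assumes "length w = length S"
  shows "rep (Foc S) w = S \<longleftrightarrow> w = S"
proof
  assume rep: "rep (Foc S) w = S"
  then have "kBOM S w = length w"
    using length_rep_Foc[of S w] assms by simp
  then show "w = S" using rep by (simp add: rep_Foc_eq_drop)
qed (simp add: rep_Foc_eq_drop kBOM_self)

theorem lemma21:
  fixes S a a' :: "'a::finite list" and m :: nat
  assumes "length S = m" and "length a = m" and "length a' = m"
    and "rep (Foc S) a = rep (Foc S) a'"
  shows "fBOM S a = fBOM S a' \<and> gBOM S a = gBOM S a'"
proof -
  have "kBOM S a = kBOM S a'"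
    using arg_cong[OF assms(4), of length] by (simp only: length_rep_Foc)
  moreover have "a = S \<longleftrightarrow> a' = S"
    using assms rep_Foc_eq_self_iff[of a S] rep_Foc_eq_self_iff[of a' S] by simp
  ultimately show ?thesis unfolding fBOM_def gBOM_def by simp
qed

end
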